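(* Let $\mathcal{G}=(G,\Pi,T,s_0)$ be a game and let $t\in\mathbb{Q}\cap[0,1]$ be a threshold. If there is a collective strategy $\bar\sigma_\Pi$ such that for every strategy $\sigma_{\mathsf O}$ of the opponent the set $T$ is reached from $s_0$ with probability strictly greater than $t$, then there is a memoryless collective strategy with the same property.
   Context: A game structure is $G=(\Sigma,S,(A_p)_{p\in\Sigma},(\mathsf{Av}_p)_{p\in\Sigma},\delta)$ with a set $\Sigma$ of players, a finite set $S$ of states, finite action sets $A_p$, nonempty sets $\mathsf{Av}_p(s)\subseteq A_p$ of actions available to $p$ at $s$, and a transition function $\delta$ mapping each state $s$ and each action profile $(a_p)_{p\in\Sigma}$ with $a_p\in\mathsf{Av}_p(s)$ to a probability distribution $\delta(s,(a_p)_p)$ on $S$. A game is $\mathcal G=(G,\Pi,T,s_0)$ with a team $\Pi\subseteq\Sigma$, target set $T\subseteq S$ assumed absorbing (every action profile at $t\in T$ leads to $t$ with probability 1), and initial state $s_0$. Throughout, $\Sigma\setminus\Pi=\{\mathsf O\}$ is a single player, the opponent. A history is a nonempty finite word over $S$, a play an infinite one. A strategy for player $p$ maps each history $hs$ (last state $s$) to a probability distribution over $\mathsf{Av}_p(s)$; it is memoryless if its value depends only on the last state. A collective strategy is a tuple $\bar\sigma_\Pi=(\sigma_p)_{p\in\Pi}$ of strategies, one per team player; the team players randomise independently, i.e. at history $h$ the joint action $(a_p)_{p\in\Pi}$ is chosen with probability $\prod_{p\in\Pi}\sigma_p(h)(a_p)$. A complete profile $\bar\sigma$ induces a probability measure on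 plays starting at $s_0$ where from history $hs$ the next state is $s'$ with probability $\sum_{\bar a}\bar\sigma(hs)(\bar a)\,\delta(s,\bar a)(s')$, $\bar a$ ranging over available action profiles and $\bar\sigma(hs)(\bar a)=\prod_{p\in\Sigma}\sigma_p(hs)(a_p)$. A collective strategy is memoryless if each component is. *)

theory Defs
  imports "HOL-Probability.Probability"
begin

(* An action profile is a function 'p => 'a (only its values on Sigma matter;
   we use extensional functions from PiE).  delta s a is a distribution on states. *)

definition game_structure ::
  "'p set \<Rightarrow> 's set \<Rightarrow> ('p \<Rightarrow> 's \<Rightarrow> 'a set) \<Rightarrow> ('s \<Rightarrow> ('p \<Rightarrow> 'a) \<Rightarrow> 's pmf) \<Rightarrow> bool" where
  "game_structure Sig S Av \<delta> \<longleftrightarrow>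
     finite Sig \<and> finite S \<and>
     (\<forall>p\<in>Sig. \<forall>s\<in>S. finite (Av p s) \<and> Av p s \<noteq> {}) \<and>
     (\<forall>s\<in>S. \<forall>a\<in>(\<Pi>\<^sub>E p\<in>Sig. Av p s). set_pmf (\<delta> s a) \<subseteq> S)"

definition histories :: "'s set \<Rightarrow> 's list set" where
  "histories S = {h. h \<noteq> [] \<and> set h \<subseteq> S}"

definition strategy :: "'s set \<Rightarrow> ('p \<Rightarrow> 's \<Rightarrow> 'a set) \<Rightarrow> 'p \<Rightarrow> ('s list \<Rightarrow> 'a pmf) \<Rightarrow> bool" where
  "strategy S Av p \<sigma> \<longleftrightarrow> (\<forall>h\<in>histories S. set_pmf (\<sigma> h) \<subseteq> Av p (last h))"

definition memoryless :: "'s set \<Rightarrow> ('s list \<Rightarrow> 'a pmf) \<Rightarrow> bool" where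
  "memoryless S \<sigma> \<longleftrightarrow>
     (\<forall>h\<in>histories S. \<forall>h'\<in>histories S. last h = last h' \<longrightarrow> \<sigma> h = \<sigma> h')"

definition collective_strategy ::
  "'s set \<Rightarrow> ('p \<Rightarrow> 's \<Rightarrow> 'a set) \<Rightarrow> 'p set \<Rightarrow> ('p \<Rightarrow> 's list \<Rightarrow> 'a pmf) \<Rightarrow> bool" where
  "collective_strategy S Av Team \<sigma> \<longleftrightarrow> (\<forall>p\<in>Team. strategy S Av p (\<sigma> p))"

definition memoryless_collective :: "'s set \<Rightarrow> 'p set \<Rightarrow> ('p \<Rightarrow> 's list \<Rightarrow> 'a pmf) \<Rightarrow> bool" where
  "memoryless_collective S Team \<sigma> \<longleftrightarrow> (\<forall>p\<in>Team. memoryless S (\<sigma> p))"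

definition combine :: "'p \<Rightarrow> ('p \<Rightarrow> 's list \<Rightarrow> 'a pmf) \<Rightarrow> ('s list \<Rightarrow> 'a pmf) \<Rightarrow> 'p \<Rightarrow> 's list \<Rightarrow> 'a pmf" where
  "combine Opp \<sigma> \<sigma>O = (\<lambda>p. if p = Opp then \<sigma>O else \<sigma> p)"

definition next_prob ::
  "'p set \<Rightarrow> ('p \<Rightarrow> 's \<Rightarrow> 'a set) \<Rightarrow> ('s \<Rightarrow> ('p \<Rightarrow> 'a) \<Rightarrow> 's pmf) \<Rightarrow>
   ('p \<Rightarrow> 's list \<Rightarrow> 'a pmf) \<Rightarrow> 's list \<Rightarrow> 's \<Rightarrow> real" where
  "next_prob Sig Av \<delta> \<sigma> h s' =
     (\<Sum>a\<in>(\<Pi>\<^sub>E p\<in>Sig. Av p (last h)).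
        (\<Prod>p\<in>Sig. pmf (\<sigma> p h) (a p)) * pmf (\<delta> (last h) a) s')"

(* probability, under the induced measure on plays extending history h,
   that T is visited within the next n steps (or already at last h) *)
fun reach_within ::
  "'p set \<Rightarrow> 's set \<Rightarrow> ('p \<Rightarrow> 's \<Rightarrow> 'a set) \<Rightarrow> ('s \<Rightarrow> ('p \<Rightarrow> 'a) \<Rightarrow> 's pmf) \<Rightarrow> 's set \<Rightarrow>
   ('p \<Rightarrow> 's list \<Rightarrow> 'a pmf) \<Rightarrow> nat \<Rightarrow> 's list \<Rightarrow> real" where
  "reach_within Sig S Av \<delta> T \<sigma> 0 h = (if last h \<in> T then 1 else 0)"
| "reach_within Sig S Av \<delta> T \<sigma> (Suc n) h =
     (if last h \<in> T then 1 else
        (\<Sum>s'\<in>S. next_prob Sig Av \<delta> \<sigma> h s' * reach_within Sig S Av \<delta> T \<sigma> n (h @ [s'])))"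

(* probability of reaching T from s0: the measure of the event "eventually T"
   is the limit (= supremum, the sequence being nondecreasing) of the
   probabilities of reaching T within n steps *)
definition reach_prob ::
  "'p set \<Rightarrow> 's set \<Rightarrow> ('p \<Rightarrow> 's \<Rightarrow> 'a set) \<Rightarrow> ('s \<Rightarrow> ('p \<Rightarrow> 'a) \<Rightarrow> 's pmf) \<Rightarrow> 's set \<Rightarrow>
   ('p \<Rightarrow> 's list \<Rightarrow> 'a pmf) \<Rightarrow> 's \<Rightarrow> real" where
  "reach_prob Sig S Av \<delta> T \<sigma> s0 = (SUP n. reach_within Sig S Av \<delta> T \<sigma> n [s0])"

definition absorbing ::
  "'p set \<Rightarrow> ('p \<Rightarrow> 's \<Rightarrow> 'a set) \<Rightarrow> ('s \<Rightarrow> ('p \<Rightarrow> 'a) \<Rightarrow> 's pmf) \<Rightarrow> 's set \<Rightarrow> bool" where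
  "absorbing Sig Av \<delta> T \<longleftrightarrow>
     (\<forall>t\<in>T. \<forall>a\<in>(\<Pi>\<^sub>E p\<in>Sig. Av p t). \<delta> t a = return_pmf t)"

end

theory Submission
  imports Defs
begin

text \<open>Fix a team strategy \<sigma> as in the hypothesis. For a state s and a payoff w on states,
  sup_guarantee w s is the best expected value of w that the team secures in one step against
  every opponent action by behaving as \<sigma> does after some history ending in s. Let V be the
  limit of value iteration for this one-step operator. The opponent that greedily minimises the
  expectation of V keeps the reachability probability under \<sigma> below V, so t < V s0, and
  already t < V' s0 for some finite iterate V' = disc_value 0 m.

  Conversely, let U be the m-th iterate of the same operator discounted by 1 - lam. Fixing for
  every state one history that nearly attains sup_guarantee U and copying \<sigma>'s behaviour there
  gives a memoryless team strategy under which U is superharmonic up to an error \<eta>, with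
  discount 1 - lam. Against every opponent the reachability probability is then at least
  U s0 - \<eta> / lam - (1 - lam)^k \<ge> V' s0 - m lam - \<eta> / lam - (1 - lam)^k, which exceeds t
  for suitable lam, \<eta> and k.\<close>

locale game =
  fixes Sig :: "'p set" and S :: "'s set" and Av :: "'p \<Rightarrow> 's \<Rightarrow> 'a set"
    and \<delta> :: "'s \<Rightarrow> ('p \<Rightarrow> 'a) \<Rightarrow> 's pmf"
  assumes game_structure: "game_structure Sig S Av \<delta>"
begin

lemma finite_players: "finite Sig"
  and finite_states: "finite S"
  and finite_actions: "p \<in> Sig \<Longrightarrow> s \<in> S \<Longrightarrow> finite (Av p s)"
  and actions_nonempty: "p \<in> Sig \<Longrightarrow> s \<in> S \<Longrightarrow> Av p s \<noteq> {}"
  and set_pmf_transition: "s \<in> S \<Longrightarrow> a \<in> (\<Pi>\<^sub>E p\<in>Sig. Av p s) \<Longrightarrow> set_pmf (\<delta> s a) \<subseteq> S"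
  using game_structure unfolding game_structure_def by auto

lemma last_in_states: "h \<in> histories S \<Longrightarrow> last h \<in> S"
  and snoc_in_histories: "h \<in> histories S \<Longrightarrow> s \<in> S \<Longrightarrow> h @ [s] \<in> histories S"
  and singleton_in_histories: "s \<in> S \<Longrightarrow> [s] \<in> histories S"
  unfolding histories_def by auto

definition legal :: "('p \<Rightarrow> 's list \<Rightarrow> 'a pmf) \<Rightarrow> 's list \<Rightarrow> bool" where
  "legal \<rho> h \<longleftrightarrow> (\<forall>p\<in>Sig. set_pmf (\<rho> p h) \<subseteq> Av p (last h))"

definition expect_next :: "('p \<Rightarrow> 's list \<Rightarrow> 'a pmf) \<Rightarrow> 's list \<Rightarrow> ('s \<Rightarrow> real) \<Rightarrow> real" where
  "expect_next \<rho> h w = (\<Sum>s'\<in>S. next_prob Sig Av \<delta> \<rho> h s' * w s')"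

lemma next_prob_nonneg: "0 \<le> next_prob Sig Av \<delta> \<rho> h s'"
  unfolding next_prob_def by (intro sum_nonneg mult_nonneg_nonneg prod_nonneg) auto

lemma sum_next_prob:
  assumes "last h \<in> S" "legal \<rho> h"
  shows "(\<Sum>s'\<in>S. next_prob Sig Av \<delta> \<rho> h s') = 1"
proof -
  let ?s = "last h"
  have "(\<Sum>s'\<in>S. next_prob Sig Av \<delta> \<rho> h s') =
      (\<Sum>a\<in>(\<Pi>\<^sub>E p\<in>Sig. Av p ?s). (\<Prod>p\<in>Sig. pmf (\<rho> p h) (a p)) * (\<Sum>s'\<in>S. pmf (\<delta> ?s a) s'))"
    unfolding next_prob_def by (subst sum.swap) (simp add: sum_distrib_left)
  also have "\<dots> = (\<Sum>a\<in>(\<Pi>\<^sub>E p\<in>Sig. Av p ?s). \<Prod>p\<in>Sig. pmf (\<rho> p h) (a p))"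
    using assms(1)
    by (intro sum.cong refl) (simp add: sum_pmf_eq_1 finite_states set_pmf_transition)
  also have "\<dots> = (\<Prod>p\<in>Sig. \<Sum>x\<in>Av p ?s. pmf (\<rho> p h) x)"
    using assms(1) by (intro prod_sum_PiE[symmetric]) (auto simp: finite_players finite_actions)
  also have "\<dots> = 1"
    using assms by (intro prod.neutral ballI sum_pmf_eq_1) (auto simp: legal_def finite_actions)
  finally show ?thesis .
qed

lemma next_prob_cong:
  assumes "last h = last h'" "\<And>p. p \<in> Sig \<Longrightarrow> \<rho> p h = \<rho>' p h'"
  shows "next_prob Sig Av \<delta> \<rho> h s' = next_prob Sig Av \<delta> \<rho>' h' s'"
  unfolding next_prob_def using assms
  by (intro sum.cong prod.cong refl arg_cong2[where f="(*)"]) auto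

lemma expect_next_mono:
  "(\<And>s. s \<in> S \<Longrightarrow> w s \<le> w' s) \<Longrightarrow> expect_next \<rho> h w \<le> expect_next \<rho> h w'"
  unfolding expect_next_def by (intro sum_mono mult_left_mono next_prob_nonneg)

lemma expect_next_add_const:
  assumes "last h \<in> S" "legal \<rho> h"
  shows "expect_next \<rho> h (\<lambda>s. w s + c) = expect_next \<rho> h w + c"
  using sum_next_prob[OF assms]
  by (simp add: expect_next_def distrib_left sum.distrib flip: sum_distrib_right)

lemma expect_next_const:
  assumes "last h \<in> S" "legal \<rho> h"
  shows "expect_next \<rho> h (\<lambda>_. c) = c"
  using expect_next_add_const[OF assms, of "\<lambda>_. 0"] by (simp add: expect_next_def)

lemma reach_within_Suc:
  "reach_within Sig S Av \<delta> T \<rho> (Suc n) h =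
    (if last h \<in> T then 1 else expect_next \<rho> h (\<lambda>s'. reach_within Sig S Av \<delta> T \<rho> n (h @ [s'])))"
  by (simp add: expect_next_def)

lemma reach_within_bounds:
  assumes "\<forall>h\<in>histories S. legal \<rho> h" "h \<in> histories S"
  shows "0 \<le> reach_within Sig S Av \<delta> T \<rho> k h \<and> reach_within Sig S Av \<delta> T \<rho> k h \<le> 1"
  using assms(2)
proof (induction k arbitrary: h)
  case 0
  then show ?case by simp
next
  case (Suc k)
  let ?r = "\<lambda>s'. reach_within Sig S Av \<delta> T \<rho> k (h @ [s'])"
  have h: "last h \<in> S" "legal \<rho> h"
    using Suc.prems assms(1) by (auto simp: last_in_states)
  have "expect_next \<rho> h (\<lambda>_. 0) \<le> expect_next \<rho> h ?r" "expect_next \<rho> h ?r \<le> expect_next \<rho> h (\<lambda>_. 1)"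
    using Suc.IH[OF snoc_in_histories[OF Suc.prems]] by (auto intro!: expect_next_mono)
  then show ?case
    unfolding reach_within_Suc by (simp add: expect_next_const[OF h])
qed

lemma reach_within_le_reach_prob:
  assumes "\<forall>h\<in>histories S. legal \<rho> h" "s0 \<in> S"
  shows "reach_within Sig S Av \<delta> T \<rho> k [s0] \<le> reach_prob Sig S Av \<delta> T \<rho> s0"
  unfolding reach_prob_def
  using reach_within_bounds[OF assms(1) singleton_in_histories[OF assms(2)]]
  by (intro cSUP_upper bdd_aboveI[of _ 1]) auto

lemma reach_within_lower_bound:
  assumes "0 < lam" "lam \<le> 1" "0 \<le> \<eta>" "\<forall>h\<in>histories S. legal \<rho> h" "\<forall>s\<in>S. u s \<le> 1"
    and super: "\<And>h. h \<in> histories S \<Longrightarrow> last h \<notin> T \<Longrightarrow> u (last h) - \<eta> \<le> (1 - lam) * expect_next \<rho> h u"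
    and "h \<in> histories S"
  shows "u (last h) - \<eta> / lam - (1 - lam) ^ k \<le> reach_within Sig S Av \<delta> T \<rho> k h"
  using assms(7)
proof (induction k arbitrary: h)
  case 0
  have "u (last h) \<le> 1" "0 \<le> \<eta> / lam"
    using 0 assms(1,3,5) last_in_states by auto
  then show ?case by simp
next
  case (Suc k)
  define c where "c = \<eta> / lam + (1 - lam) ^ k"
  let ?r = "\<lambda>s'. reach_within Sig S Av \<delta> T \<rho> k (h @ [s'])"
  have h: "last h \<in> S" "legal \<rho> h"
    using Suc.prems assms(4) by (auto simp: last_in_states)
  show ?case
  proof (cases "last h \<in> T")
    case True
    have "u (last h) \<le> 1" "0 \<le> \<eta> / lam" "0 \<le> (1 - lam) ^ Suc k"
      using h(1) assms(1-3,5) by auto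
    then show ?thesis using True unfolding reach_within_Suc by simp
  next
    case False
    have "expect_next \<rho> h u - c = expect_next \<rho> h (\<lambda>s'. u s' - c)"
      using expect_next_add_const[OF h, of u "- c"] by simp
    also have "\<dots> \<le> expect_next \<rho> h ?r"
      using Suc.IH[OF snoc_in_histories[OF Suc.prems]]
      by (intro expect_next_mono) (simp add: c_def diff_diff_eq)
    finally have lower: "expect_next \<rho> h u - c \<le> expect_next \<rho> h ?r" .
    have nonneg: "0 \<le> expect_next \<rho> h ?r"
      using reach_within_bounds[OF assms(4) snoc_in_histories[OF Suc.prems]]
        expect_next_mono[of "\<lambda>_. 0" ?r \<rho> h] by (simp add: expect_next_const[OF h])
    have "u (last h) - \<eta> / lam - (1 - lam) ^ Suc k = u (last h) - \<eta> - (1 - lam) * c"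
      using assms(1) by (simp add: c_def field_simps)
    also have "\<dots> \<le> (1 - lam) * (expect_next \<rho> h u - c)"
      using super[OF Suc.prems False] by (simp add: algebra_simps)
    also have "\<dots> \<le> (1 - lam) * expect_next \<rho> h ?r"
      using lower assms(2) by (intro mult_left_mono) auto
    also have "\<dots> \<le> expect_next \<rho> h ?r"
      using nonneg assms(1,2) by (intro mult_left_le_one_le) auto
    finally show ?thesis using False unfolding reach_within_Suc by simp
  qed
qed

end

locale team_game = game Sig S Av \<delta>
  for Sig :: "'p set" and S :: "'s set" and Av :: "'p \<Rightarrow> 's \<Rightarrow> 'a set"
    and \<delta> :: "'s \<Rightarrow> ('p \<Rightarrow> 'a) \<Rightarrow> 's pmf" +
  fixes Team :: "'p set" and Opp :: 'p
  assumes opponent: "Sig - Team = {Opp}"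
begin

lemma opponent_in_players: "Opp \<in> Sig"
  and team_member: "p \<in> Sig \<Longrightarrow> p \<noteq> Opp \<Longrightarrow> p \<in> Team"
  using opponent by auto

lemma legal_combine:
  assumes "collective_strategy S Av Team \<rho>" "h \<in> histories S" "set_pmf (\<sigma>O h) \<subseteq> Av Opp (last h)"
  shows "legal (combine Opp \<rho> \<sigma>O) h"
  using assms team_member
  unfolding legal_def combine_def collective_strategy_def strategy_def by auto

lemma prod_pmf_combine:
  "(\<Prod>p\<in>Sig. pmf (combine Opp \<rho> \<sigma>O p h) (a p)) =
    pmf (\<sigma>O h) (a Opp) * (\<Prod>p\<in>Sig - {Opp}. pmf (\<rho> p h) (a p))"
  using opponent_in_players finite_players
  by (subst prod.remove[of _ Opp]) (auto simp: combine_def intro!: prod.cong)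

lemma next_prob_combine:
  assumes "last h \<in> S" "set_pmf (\<sigma>O h) \<subseteq> Av Opp (last h)"
  shows "next_prob Sig Av \<delta> (combine Opp \<rho> \<sigma>O) h s' =
    (\<Sum>b\<in>Av Opp (last h). pmf (\<sigma>O h) b * next_prob Sig Av \<delta> (combine Opp \<rho> (\<lambda>_. return_pmf b)) h s')"
proof -
  let ?A = "\<Pi>\<^sub>E p\<in>Sig. Av p (last h)"
  let ?G = "\<lambda>a. (\<Prod>p\<in>Sig - {Opp}. pmf (\<rho> p h) (a p)) * pmf (\<delta> (last h) a) s'"
  have "(\<Sum>b\<in>Av Opp (last h).
        pmf (\<sigma>O h) b * next_prob Sig Av \<delta> (combine Opp \<rho> (\<lambda>_. return_pmf b)) h s')
      = (\<Sum>a\<in>?A. \<Sum>b\<in>Av Opp (last h). if b = a Opp then pmf (\<sigma>O h) b * ?G a else 0)"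
    unfolding next_prob_def prod_pmf_combine
    by (subst sum.swap) (auto simp: sum_distrib_left intro!: sum.cong)
  also have "\<dots> = (\<Sum>a\<in>?A. pmf (\<sigma>O h) (a Opp) * ?G a)"
    using opponent_in_players finite_actions[OF opponent_in_players assms(1)]
    by (intro sum.cong refl) (auto simp: sum.delta' PiE_iff)
  also have "\<dots> = next_prob Sig Av \<delta> (combine Opp \<rho> \<sigma>O) h s'"
    unfolding next_prob_def prod_pmf_combine by (simp add: mult.assoc)
  finally show ?thesis by simp
qed

lemma expect_next_combine:
  assumes "last h \<in> S" "set_pmf (\<sigma>O h) \<subseteq> Av Opp (last h)"
  shows "expect_next (combine Opp \<rho> \<sigma>O) h w =
    (\<Sum>b\<in>Av Opp (last h). pmf (\<sigma>O h) b * expect_next (combine Opp \<rho> (\<lambda>_. return_pmf b)) h w)"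
  unfolding expect_next_def next_prob_combine[of h \<sigma>O, OF assms]
  by (simp add: sum_distrib_left sum_distrib_right mult.assoc) (rule sum.swap)

end

locale team_strategy = team_game Sig S Av \<delta> Team Opp
  for Sig :: "'p set" and S :: "'s set" and Av :: "'p \<Rightarrow> 's \<Rightarrow> 'a set"
    and \<delta> :: "'s \<Rightarrow> ('p \<Rightarrow> 'a) \<Rightarrow> 's pmf" and Team :: "'p set" and Opp :: 'p +
  fixes T :: "'s set" and \<sigma> :: "'p \<Rightarrow> 's list \<Rightarrow> 'a pmf"
  assumes collective: "collective_strategy S Av Team \<sigma>"
begin

definition play_against :: "'a \<Rightarrow> 'p \<Rightarrow> 's list \<Rightarrow> 'a pmf" where
  "play_against b = combine Opp \<sigma> (\<lambda>_. return_pmf b)"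

definition guarantee :: "('s \<Rightarrow> real) \<Rightarrow> 's list \<Rightarrow> real" where
  "guarantee w h = Min ((\<lambda>b. expect_next (play_against b) h w) ` Av Opp (last h))"

definition sup_guarantee :: "('s \<Rightarrow> real) \<Rightarrow> 's \<Rightarrow> real" where
  "sup_guarantee w s = (SUP h\<in>{h \<in> histories S. last h = s}. guarantee w h)"

lemma legal_play_against:
  "h \<in> histories S \<Longrightarrow> b \<in> Av Opp (last h) \<Longrightarrow> legal (play_against b) h"
  unfolding play_against_def by (rule legal_combine[OF collective]) auto

lemma guarantee_le:
  assumes "h \<in> histories S" "b \<in> Av Opp (last h)"
  shows "guarantee w h \<le> expect_next (play_against b) h w"
  unfolding guarantee_def
  using assms finite_actions[OF opponent_in_players last_in_states] by simp

lemma guarantee_attained: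
  assumes "h \<in> histories S"
  obtains b where "b \<in> Av Opp (last h)" "guarantee w h = expect_next (play_against b) h w"
proof -
  have "guarantee w h \<in> (\<lambda>b. expect_next (play_against b) h w) ` Av Opp (last h)"
    unfolding guarantee_def using assms opponent_in_players last_in_states
    by (intro Min_in) (auto simp: finite_actions actions_nonempty)
  then show ?thesis using that by blast
qed

lemma guarantee_shift:
  assumes "h \<in> histories S" "\<And>s. s \<in> S \<Longrightarrow> w s \<le> w' s + c"
  shows "guarantee w h \<le> guarantee w' h + c"
proof -
  obtain b where b: "b \<in> Av Opp (last h)" "guarantee w' h = expect_next (play_against b) h w'"
    using guarantee_attained[OF assms(1)] .
  have "guarantee w h \<le> expect_next (play_against b) h w"
    by (rule guarantee_le[OF assms(1) b(1)])
  also have "\<dots> \<le> expect_next (play_against b) h (\<lambda>s. w' s + c)"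
    using assms(2) by (rule expect_next_mono)
  also have "\<dots> = guarantee w' h + c"
    using b assms(1) by (simp add: expect_next_add_const last_in_states legal_play_against)
  finally show ?thesis .
qed

lemma guarantee_const:
  assumes "h \<in> histories S"
  shows "guarantee (\<lambda>_. c) h = c"
  using guarantee_attained[OF assms, of "\<lambda>_. c"] assms
  by (metis expect_next_const last_in_states legal_play_against)

lemma sup_guarantee_upper:
  assumes "h \<in> histories S"
  shows "guarantee w h \<le> sup_guarantee w (last h)"
proof -
  have "guarantee w h' \<le> Max (w ` S)" if "h' \<in> histories S" for h'
    using guarantee_shift[OF that, of w "\<lambda>_. 0" "Max (w ` S)"]
    by (simp add: guarantee_const[OF that] finite_states)
  then show ?thesis
    unfolding sup_guarantee_def using assms by (intro cSUP_upper bdd_aboveI2) auto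
qed

lemma sup_guarantee_shift:
  assumes "s \<in> S" "\<And>s'. s' \<in> S \<Longrightarrow> w s' \<le> w' s' + c"
  shows "sup_guarantee w s \<le> sup_guarantee w' s + c"
  unfolding sup_guarantee_def[of w]
proof (rule cSUP_least)
  show "{h \<in> histories S. last h = s} \<noteq> {}"
    using singleton_in_histories[OF assms(1)] by force
  fix h assume "h \<in> {h \<in> histories S. last h = s}"
  then show "guarantee w h \<le> sup_guarantee w' s + c"
    using guarantee_shift[OF _ assms(2)] sup_guarantee_upper[of h w'] by fastforce
qed

lemma sup_guarantee_const:
  assumes "s \<in> S"
  shows "sup_guarantee (\<lambda>_. c) s = c"
proof -
  have "{h \<in> histories S. last h = s} \<noteq> {}"
    using singleton_in_histories[OF assms] by force
  moreover have "sup_guarantee (\<lambda>_. c) s = (SUP h\<in>{h \<in> histories S. last h = s}. c)"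
    unfolding sup_guarantee_def by (rule SUP_cong) (auto simp: guarantee_const)
  ultimately show ?thesis by simp
qed

lemma sup_guarantee_unit_interval:
  assumes "s \<in> S" "\<And>s'. s' \<in> S \<Longrightarrow> 0 \<le> w s' \<and> w s' \<le> 1"
  shows "0 \<le> sup_guarantee w s \<and> sup_guarantee w s \<le> 1"
proof -
  have "sup_guarantee (\<lambda>_. 0) s \<le> sup_guarantee w s + 0"
    and "sup_guarantee w s \<le> sup_guarantee (\<lambda>_. 1) s + 0"
    using assms by (intro sup_guarantee_shift; simp)+
  then show ?thesis
    using assms(1) by (simp add: sup_guarantee_const)
qed

lemma sup_guarantee_approx:
  assumes "s \<in> S" "0 < \<eta>"
  shows "\<exists>h. h \<in> histories S \<and> last h = s \<and> sup_guarantee w s - \<eta> < guarantee w h"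
proof -
  have "sup_guarantee w s - \<eta> < sup_guarantee w s"
    using assms(2) by simp
  moreover have "bdd_above (guarantee w ` {h \<in> histories S. last h = s})"
    using sup_guarantee_upper by (auto intro!: bdd_aboveI2[where M="sup_guarantee w s"])
  ultimately show ?thesis
    unfolding sup_guarantee_def[of w s] using singleton_in_histories[OF assms(1)]
    by (subst (asm) less_cSUP_iff) force+
qed

definition witness_history :: "('s \<Rightarrow> real) \<Rightarrow> real \<Rightarrow> 's \<Rightarrow> 's list" where
  "witness_history w \<eta> s =
    (SOME h. h \<in> histories S \<and> last h = s \<and> sup_guarantee w s - \<eta> < guarantee w h)"

lemma witness_history:
  assumes "s \<in> S" "0 < \<eta>"
  shows "witness_history w \<eta> s \<in> histories S" "last (witness_history w \<eta> s) = s"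
    and "sup_guarantee w s - \<eta> < guarantee w (witness_history w \<eta> s)"
  using someI_ex[OF sup_guarantee_approx[OF assms]] unfolding witness_history_def by auto

definition memoryless_copy :: "('s \<Rightarrow> real) \<Rightarrow> real \<Rightarrow> 'p \<Rightarrow> 's list \<Rightarrow> 'a pmf" where
  "memoryless_copy w \<eta> p h = \<sigma> p (witness_history w \<eta> (last h))"

lemma memoryless_collective_memoryless_copy: "memoryless_collective S Team (memoryless_copy w \<eta>)"
  unfolding memoryless_collective_def memoryless_def memoryless_copy_def by simp

lemma collective_strategy_memoryless_copy:
  assumes "0 < \<eta>"
  shows "collective_strategy S Av Team (memoryless_copy w \<eta>)"
  unfolding collective_strategy_def strategy_def
proof (intro ballI)
  fix p h assume "p \<in> Team" "h \<in> histories S"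
  with collective witness_history[OF last_in_states assms]
  show "set_pmf (memoryless_copy w \<eta> p h) \<subseteq> Av p (last h)"
    unfolding collective_strategy_def strategy_def memoryless_copy_def by metis
qed

lemma expect_next_memoryless_copy:
  assumes "0 < \<eta>" "strategy S Av Opp \<sigma>O" "h \<in> histories S"
  shows "sup_guarantee w (last h) - \<eta> \<le> expect_next (combine Opp (memoryless_copy w \<eta>) \<sigma>O) h w"
proof -
  define g where "g = witness_history w \<eta> (last h)"
  have g: "g \<in> histories S" "last g = last h" "sup_guarantee w (last h) - \<eta> < guarantee w g"
    unfolding g_def using witness_history[OF last_in_states[OF assms(3)] assms(1)] by auto
  have \<sigma>O: "set_pmf (\<sigma>O h) \<subseteq> Av Opp (last h)"
    using assms(2,3) unfolding strategy_def by blast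
  have copy: "expect_next (combine Opp (memoryless_copy w \<eta>) (\<lambda>_. return_pmf b)) h w
      = expect_next (play_against b) g w" for b
    unfolding expect_next_def play_against_def
    by (intro sum.cong refl arg_cong2[where f="(*)"] next_prob_cong)
      (auto simp: g(2) combine_def memoryless_copy_def g_def[symmetric])
  have "sup_guarantee w (last h) - \<eta> =
      (\<Sum>b\<in>Av Opp (last h). pmf (\<sigma>O h) b * (sup_guarantee w (last h) - \<eta>))"
    using \<sigma>O by (simp add: sum_pmf_eq_1 finite_actions opponent_in_players last_in_states assms(3)
        flip: sum_distrib_right)
  also have "\<dots> \<le> (\<Sum>b\<in>Av Opp (last h). pmf (\<sigma>O h) b * expect_next (play_against b) g w)"
    using g guarantee_le[OF g(1), of _ w] by (intro sum_mono mult_left_mono) fastforce+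
  also have "\<dots> = expect_next (combine Opp (memoryless_copy w \<eta>) \<sigma>O) h w"
    using expect_next_combine[of h \<sigma>O, OF last_in_states[OF assms(3)] \<sigma>O] by (simp add: copy)
  finally show ?thesis .
qed

primrec disc_value :: "real \<Rightarrow> nat \<Rightarrow> 's \<Rightarrow> real" where
  "disc_value lam 0 s = (if s \<in> T then 1 else 0)"
| "disc_value lam (Suc m) s = (if s \<in> T then 1 else (1 - lam) * sup_guarantee (disc_value lam m) s)"

lemma disc_value_bounds:
  assumes "0 \<le> lam" "lam \<le> 1" "s \<in> S"
  shows "0 \<le> disc_value lam m s \<and> disc_value lam m s \<le> 1"
  using assms(3)
proof (induction m arbitrary: s)
  case 0
  then show ?case by simp
next
  case (Suc m)
  then show ?case
    using sup_guarantee_unit_interval[of s "disc_value lam m"] assms(1,2) by (simp add: mult_le_one)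
qed

lemma disc_value_Suc_mono:
  assumes "0 \<le> lam" "lam \<le> 1" "s \<in> S"
  shows "disc_value lam m s \<le> disc_value lam (Suc m) s"
  using assms(3)
proof (induction m arbitrary: s)
  case 0
  then show ?case
    using disc_value_bounds[OF assms(1,2) 0, of 1] by auto
next
  case (Suc m)
  have "sup_guarantee (disc_value lam m) s \<le> sup_guarantee (disc_value lam (Suc m)) s + 0"
    using Suc by (intro sup_guarantee_shift) auto
  then have "(1 - lam) * sup_guarantee (disc_value lam m) s
      \<le> (1 - lam) * sup_guarantee (disc_value lam (Suc m)) s"
    using assms(2) by (intro mult_left_mono) auto
  then show ?case
    by simp
qed

lemma disc_value_mono:
  assumes "0 \<le> lam" "lam \<le> 1" "s \<in> S" "m \<le> m'"
  shows "disc_value lam m s \<le> disc_value lam m' s"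
  using lift_Suc_mono_le[of "\<lambda>m. disc_value lam m s"] disc_value_Suc_mono[OF assms(1-3)] assms(4)
  by blast

lemma disc_value_zero_le:
  assumes "0 \<le> lam" "lam \<le> 1" "s \<in> S"
  shows "disc_value 0 m s \<le> disc_value lam m s + m * lam"
  using assms(3)
proof (induction m arbitrary: s)
  case 0
  then show ?case by simp
next
  case (Suc m)
  have "sup_guarantee (disc_value 0 m) s \<le> sup_guarantee (disc_value lam m) s + m * lam"
    using Suc by (intro sup_guarantee_shift) auto
  moreover have "lam * sup_guarantee (disc_value lam m) s \<le> lam"
    using sup_guarantee_unit_interval[of s "disc_value lam m"] disc_value_bounds[OF assms(1,2)]
      Suc.prems assms(1) by (simp add: mult_left_le)
  ultimately show ?case
    using assms(1) by (simp add: algebra_simps)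
qed

definition value_lim :: "'s \<Rightarrow> real" where
  "value_lim s = (SUP m. disc_value 0 m s)"

lemma disc_value_le_value_lim:
  assumes "s \<in> S"
  shows "disc_value 0 m s \<le> value_lim s"
  unfolding value_lim_def using disc_value_bounds[of 0 s] assms
  by (intro cSUP_upper bdd_aboveI[of _ 1]) auto

lemma value_lim_bounds:
  assumes "s \<in> S"
  shows "0 \<le> value_lim s \<and> value_lim s \<le> 1"
proof
  show "0 \<le> value_lim s"
    using disc_value_le_value_lim[OF assms, of 0] disc_value_bounds[of 0 s 0] assms by linarith
  show "value_lim s \<le> 1"
    unfolding value_lim_def using disc_value_bounds[of 0 s] assms by (intro cSUP_least) auto
qed

lemma value_lim_target: "s \<in> S \<Longrightarrow> s \<in> T \<Longrightarrow> value_lim s = 1"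
  using disc_value_le_value_lim[of s 0] value_lim_bounds[of s] by simp

lemma value_lim_uniform_approx:
  assumes "0 < \<epsilon>"
  obtains m where "\<And>s. s \<in> S \<Longrightarrow> value_lim s \<le> disc_value 0 m s + \<epsilon>"
proof -
  have "\<exists>m. value_lim s - \<epsilon> < disc_value 0 m s" if "s \<in> S" for s
  proof -
    have "bdd_above (range (\<lambda>m. disc_value 0 m s))"
      using disc_value_bounds[of 0 s] that by (intro bdd_aboveI[of _ 1]) auto
    moreover have "value_lim s - \<epsilon> < value_lim s"
      using assms by simp
    ultimately show ?thesis
      unfolding value_lim_def by (simp add: less_cSUP_iff)
  qed
  then obtain f where f: "\<And>s. s \<in> S \<Longrightarrow> value_lim s - \<epsilon> < disc_value 0 (f s) s"
    by metis
  have "value_lim s \<le> disc_value 0 (Max (f ` S)) s + \<epsilon>" if "s \<in> S" for s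
    using f[OF that] disc_value_mono[of 0 s "f s" "Max (f ` S)"] that finite_states by force
  then show ?thesis using that by blast
qed

lemma sup_guarantee_value_lim:
  assumes "s \<in> S" "s \<notin> T"
  shows "sup_guarantee value_lim s \<le> value_lim s"
proof (rule field_le_epsilon)
  fix \<epsilon> :: real assume "0 < \<epsilon>"
  then obtain m where m: "\<And>s. s \<in> S \<Longrightarrow> value_lim s \<le> disc_value 0 m s + \<epsilon>"
    using value_lim_uniform_approx by blast
  have "sup_guarantee value_lim s \<le> sup_guarantee (disc_value 0 m) s + \<epsilon>"
    using assms(1) m by (rule sup_guarantee_shift)
  also have "\<dots> = disc_value 0 (Suc m) s + \<epsilon>"
    using assms(2) by simp
  also have "\<dots> \<le> value_lim s + \<epsilon>"
    using disc_value_le_value_lim[OF assms(1), of "Suc m"] by simp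
  finally show "sup_guarantee value_lim s \<le> value_lim s + \<epsilon>" .
qed

definition greedy_action :: "'s list \<Rightarrow> 'a" where
  "greedy_action h = (SOME b. b \<in> Av Opp (last h) \<and>
     guarantee value_lim h = expect_next (play_against b) h value_lim)"

lemma greedy_action:
  assumes "h \<in> histories S"
  shows "greedy_action h \<in> Av Opp (last h)"
    and "guarantee value_lim h = expect_next (play_against (greedy_action h)) h value_lim"
proof -
  have "\<exists>b. b \<in> Av Opp (last h) \<and> guarantee value_lim h = expect_next (play_against b) h value_lim"
    using guarantee_attained[OF assms] by metis
  from someI_ex[OF this] show "greedy_action h \<in> Av Opp (last h)"
    and "guarantee value_lim h = expect_next (play_against (greedy_action h)) h value_lim"
    unfolding greedy_action_def by simp_all
qed

lemma strategy_greedy_action: "strategy S Av Opp (\<lambda>h. return_pmf (greedy_action h))"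
  unfolding strategy_def using greedy_action(1) by simp

lemma reach_within_greedy_action:
  assumes "h \<in> histories S"
  shows "reach_within Sig S Av \<delta> T (combine Opp \<sigma> (\<lambda>h. return_pmf (greedy_action h))) k h
    \<le> value_lim (last h)"
  using assms
proof (induction k arbitrary: h)
  case 0
  have "last h \<in> S"
    using 0 by (rule last_in_states)
  then show ?case
    using value_lim_bounds value_lim_target by simp
next
  case (Suc k)
  let ?\<rho> = "combine Opp \<sigma> (\<lambda>h. return_pmf (greedy_action h))"
  have s: "last h \<in> S"
    using Suc.prems by (rule last_in_states)
  show ?case
  proof (cases "last h \<in> T")
    case True
    then show ?thesis using value_lim_target[OF s] by simp
  next
    case False
    have "expect_next ?\<rho> h (\<lambda>s'. reach_within Sig S Av \<delta> T ?\<rho> k (h @ [s']))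
        \<le> expect_next ?\<rho> h value_lim"
      using Suc.IH[OF snoc_in_histories[OF Suc.prems]] by (intro expect_next_mono) simp
    also have "\<dots> = expect_next (play_against (greedy_action h)) h value_lim"
      unfolding expect_next_def play_against_def
      by (intro sum.cong refl arg_cong2[where f="(*)"] next_prob_cong) (auto simp: combine_def)
    also have "\<dots> = guarantee value_lim h"
      using greedy_action(2)[OF Suc.prems] by simp
    also have "\<dots> \<le> value_lim (last h)"
      using sup_guarantee_upper[OF Suc.prems, of value_lim] sup_guarantee_value_lim[OF s False]
      by simp
    finally show ?thesis
      using False unfolding reach_within_Suc by simp
  qed
qed

lemma disc_value_above_threshold:
  assumes "s0 \<in> S"
    and "\<And>\<sigma>O. strategy S Av Opp \<sigma>O \<Longrightarrow> t < reach_prob Sig S Av \<delta> T (combine Opp \<sigma> \<sigma>O) s0"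
  obtains m where "t < disc_value 0 m s0"
proof -
  have "t < reach_prob Sig S Av \<delta> T (combine Opp \<sigma> (\<lambda>h. return_pmf (greedy_action h))) s0"
    by (rule assms(2)[OF strategy_greedy_action])
  also have "\<dots> \<le> value_lim s0"
    unfolding reach_prob_def
    using reach_within_greedy_action[of "[s0]"] singleton_in_histories[OF assms(1)]
    by (intro cSUP_least) auto
  finally have "t < value_lim s0" .
  moreover have "bdd_above (range (\<lambda>m. disc_value 0 m s0))"
    using disc_value_bounds[of 0 s0] assms(1) by (intro bdd_aboveI[of _ 1]) auto
  ultimately show ?thesis
    using that unfolding value_lim_def by (auto simp: less_cSUP_iff)
qed

lemma reach_prob_memoryless_copy:
  assumes "0 < lam" "lam \<le> 1" "0 < \<eta>" "strategy S Av Opp \<sigma>O" "s0 \<in> S"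
  shows "disc_value lam m s0 - \<eta> / lam - (1 - lam) ^ k
    \<le> reach_prob Sig S Av \<delta> T (combine Opp (memoryless_copy (disc_value lam m) \<eta>) \<sigma>O) s0"
proof -
  let ?u = "disc_value lam m"
  let ?\<rho> = "combine Opp (memoryless_copy ?u \<eta>) \<sigma>O"
  have legal: "\<forall>h\<in>histories S. legal ?\<rho> h"
    using legal_combine[OF collective_strategy_memoryless_copy[OF assms(3)]] assms(4)
    unfolding strategy_def by blast
  have super: "?u (last h) - \<eta> \<le> (1 - lam) * expect_next ?\<rho> h ?u"
    if "h \<in> histories S" "last h \<notin> T" for h
  proof -
    have "?u (last h) \<le> (1 - lam) * sup_guarantee ?u (last h)"
      using disc_value_Suc_mono[of lam "last h" m] assms(1,2) last_in_states[OF that(1)] that(2)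
      by simp
    moreover have "(1 - lam) * (sup_guarantee ?u (last h) - \<eta>) \<le> (1 - lam) * expect_next ?\<rho> h ?u"
      using expect_next_memoryless_copy[OF assms(3,4) that(1)] assms(2)
      by (intro mult_left_mono) auto
    moreover have "(1 - lam) * \<eta> \<le> \<eta>"
      using assms(1-3) by (intro mult_left_le_one_le) auto
    ultimately show ?thesis
      by (simp add: algebra_simps)
  qed
  have "?u s0 - \<eta> / lam - (1 - lam) ^ k \<le> reach_within Sig S Av \<delta> T ?\<rho> k [s0]"
    using reach_within_lower_bound[OF assms(1,2) _ legal _ super, where h="[s0]"]
      singleton_in_histories[OF assms(5)] disc_value_bounds assms(1-3) by simp
  also have "\<dots> \<le> reach_prob Sig S Av \<delta> T ?\<rho> s0"
    using legal assms(5) by (rule reach_within_le_reach_prob)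
  finally show ?thesis .
qed

lemma memoryless_above_threshold:
  assumes "s0 \<in> S" "0 \<le> t" "t < disc_value 0 m s0"
  shows "\<exists>\<tau>. collective_strategy S Av Team \<tau> \<and> memoryless_collective S Team \<tau> \<and>
    (\<forall>\<sigma>O. strategy S Av Opp \<sigma>O \<longrightarrow> t < reach_prob Sig S Av \<delta> T (combine Opp \<tau> \<sigma>O) s0)"
proof -
  \<comment> \<open>each of the error terms m lam, \<eta> / lam and (1 - lam)^k stays below gap / 4\<close>
  define gap where "gap = disc_value 0 m s0 - t"
  define lam where "lam = gap / (4 * (m + 1))"
  define \<eta> where "\<eta> = lam * gap / 4"
  have gap: "0 < gap" "gap \<le> 1"
    using assms disc_value_bounds[of 0 s0 m] by (auto simp: gap_def)
  then have lam: "0 < lam" "lam \<le> 1" "m * lam \<le> gap / 4"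
    by (auto simp: lam_def field_simps)
  then have \<eta>: "0 < \<eta>" "\<eta> / lam = gap / 4"
    using gap by (auto simp: \<eta>_def)
  obtain k where k: "(1 - lam) ^ k < gap / 4"
    using real_arch_pow_inv[of "gap / 4" "1 - lam"] gap lam by auto
  show ?thesis
  proof (intro exI conjI allI impI)
    show "collective_strategy S Av Team (memoryless_copy (disc_value lam m) \<eta>)"
      using \<eta> by (intro collective_strategy_memoryless_copy)
    show "memoryless_collective S Team (memoryless_copy (disc_value lam m) \<eta>)"
      by (rule memoryless_collective_memoryless_copy)
    fix \<sigma>O assume "strategy S Av Opp \<sigma>O"
    from reach_prob_memoryless_copy[OF lam(1,2) \<eta>(1) this assms(1), of m k]
    show "t < reach_prob Sig S Av \<delta> T (combine Opp (memoryless_copy (disc_value lam m) \<eta>) \<sigma>O) s0"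
      using disc_value_zero_le[of lam s0 m, OF less_imp_le[OF lam(1)] lam(2) assms(1)]
        lam(3) \<eta>(2) k gap gap_def by linarith
  qed
qed

end

theorem theorem1:
  fixes Sig Team :: "'p set" and S T :: "'s set" and Av :: "'p \<Rightarrow> 's \<Rightarrow> 'a set"
    and \<delta> :: "'s \<Rightarrow> ('p \<Rightarrow> 'a) \<Rightarrow> 's pmf" and s0 :: 's and Opp :: 'p and t :: real
  assumes "game_structure Sig S Av \<delta>"
    and "Team \<subseteq> Sig" and "Sig - Team = {Opp}"
    and "T \<subseteq> S" and "absorbing Sig Av \<delta> T" and "s0 \<in> S"
    and "t \<in> \<rat>" and "0 \<le> t" and "t \<le> 1"
    and "\<exists>\<sigma>. collective_strategy S Av Team \<sigma> \<and>
           (\<forall>\<sigma>Opp. strategy S Av Opp \<sigma>Opp \<longrightarrow> reach_prob Sig S Av \<delta> T (combine Opp \<sigma> \<sigma>Opp) s0 > t)"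
  shows "\<exists>\<sigma>. collective_strategy S Av Team \<sigma> \<and> memoryless_collective S Team \<sigma> \<and>
           (\<forall>\<sigma>Opp. strategy S Av Opp \<sigma>Opp \<longrightarrow> reach_prob Sig S Av \<delta> T (combine Opp \<sigma> \<sigma>Opp) s0 > t)"
proof -
  obtain \<sigma> where \<sigma>: "collective_strategy S Av Team \<sigma>"
    and above: "\<And>\<sigma>O. strategy S Av Opp \<sigma>O \<Longrightarrow> t < reach_prob Sig S Av \<delta> T (combine Opp \<sigma> \<sigma>O) s0"
    using assms(10) by blast
  interpret team_strategy Sig S Av \<delta> Team Opp T \<sigma>
    using assms(1,3) \<sigma> by unfold_locales
  obtain m where "t < disc_value 0 m s0"
    using disc_value_above_threshold[OF assms(6) above] .
  then show ?thesis
    using memoryless_above_threshold[OF assms(6,8)] by blast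
qed

end
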